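(* For each $k\ge 1$: if $k$ is odd, then $\Sigma^1_k\text{-}\mathrm{KROM}^r\equiv\Sigma^1_{k+1}\text{-}\mathrm{KROM}^r$; if $k$ is even, then $\Pi^1_k\text{-}\mathrm{KROM}^r\equiv\Pi^1_{k+1}\text{-}\mathrm{KROM}^r$ (equivalence on all finite structures).
   Context: All structures are finite; every vocabulary contains equality. For a vocabulary $\tau$, an SO-KROM$^r(\tau)$ formula is a second-order formula of the form $Q_1R_1\cdots Q_mR_m\forall\bar{x}(C_1\wedge\cdots\wedge C_n)$, where each $Q_i\in\{\forall,\exists\}$, $R_1,\dots,R_m$ are second-order relation variables, and each clause $C_j$ is a disjunction $\beta_1\vee\cdots\vee\beta_q\vee H_1\vee H_2$ in which each $\beta_s$ is an atomic or negated atomic $\tau$-formula ($P\bar{y}$ or $\neg P\bar{y}$, $P\in\tau$, including equality), and each $H_t$ is one of $R_i\bar{z}$, $\neg R_i\bar{z}$, $\exists z_1\cdots\exists z_{r}R_i z_1\dots z_r$ ($r$ the arity of $R_i$), or $\bot$. $\Sigma^1_k\text{-}\mathrm{KROM}^r$ (resp. $\Pi^1_k\text{-}\mathrm{KROM}^r$) is the set of SO-KROM$^r$ formulas whose second-order prefix starts with an existential (resp. universal) quantifier and has exactly $k-1$ alternations between blocks of existential and universal quantifiers. For logics $\mathcal{L}_1,\mathcal{L}_2$, $\mathcal{L}_1\le\mathcal{L}_2$ means every $\mathcal{L}_1$ formula is equivalent to some $\mathcal{L}_2$ formula over the same vocabulary, and $\mathcal{L}_1\equiv\mathcal{L}_2$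 means both $\mathcal{L}_1\le\mathcal{L}_2$ and $\mathcal{L}_2\le\mathcal{L}_1$. *)

theory Defs
  imports Main
begin

text \<open>Second-order variables are referred to
positionally: the i-th entry of the prefix binds the relation variable R_i.\<close>

datatype 'p folit =
    FPos 'p "nat list"
  | FNeg 'p "nat list"
  | FEq nat nat
  | FNeq nat nat

datatype solit =
    SPos nat "nat list"
  | SNeg nat "nat list"
  | SNonempty nat
  | SBot

text \<open>A clause is beta_1 or ... or beta_q or H_1 or H_2.\<close>
type_synonym 'p clause = "'p folit list \<times> solit \<times> solit"

text \<open>A formula Q_1 R_1 ... Q_m R_m forall x (C_1 and ... and C_n):
the prefix lists (is_existential, arity of R_i); the matrix is the clause list.
The first-order universal block quantifies all first-order variables.\<close>
datatype 'p krom = Krom (kpref: "(bool \<times> nat) list") (kmat: "'p clause list")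

fun folit_wf :: "'p set \<Rightarrow> ('p \<Rightarrow> nat) \<Rightarrow> 'p folit \<Rightarrow> bool" where
  "folit_wf tau ar (FPos p ys) = (p \<in> tau \<and> length ys = ar p)"
| "folit_wf tau ar (FNeg p ys) = (p \<in> tau \<and> length ys = ar p)"
| "folit_wf tau ar (FEq x y) = True"
| "folit_wf tau ar (FNeq x y) = True"

fun solit_wf :: "(bool \<times> nat) list \<Rightarrow> solit \<Rightarrow> bool" where
  "solit_wf pre (SPos i zs) = (i < length pre \<and> length zs = snd (pre ! i))"
| "solit_wf pre (SNeg i zs) = (i < length pre \<and> length zs = snd (pre ! i))"
| "solit_wf pre (SNonempty i) = (i < length pre)"
| "solit_wf pre SBot = True"

definition krom_wf :: "'p set \<Rightarrow> ('p \<Rightarrow> nat) \<Rightarrow> nat \<Rightarrow> 'p krom \<Rightarrow> bool" where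
  "krom_wf tau ar r phi \<longleftrightarrow>
     (\<forall>q \<in> set (kpref phi). 1 \<le> snd q \<and> snd q \<le> r) \<and>
     (\<forall>(bs, h1, h2) \<in> set (kmat phi).
        (\<forall>b \<in> set bs. folit_wf tau ar b) \<and> solit_wf (kpref phi) h1 \<and> solit_wf (kpref phi) h2)"

text \<open>Number of blocks of the second-order prefix = number of alternations + 1.\<close>
definition nblocks :: "(bool \<times> nat) list \<Rightarrow> nat" where
  "nblocks pre = length (remdups_adj (map fst pre))"

definition Sigma_krom :: "'p set \<Rightarrow> ('p \<Rightarrow> nat) \<Rightarrow> nat \<Rightarrow> nat \<Rightarrow> 'p krom set" where
  "Sigma_krom tau ar r k = {phi. krom_wf tau ar r phi \<and> kpref phi \<noteq> [] \<and>
      fst (hd (kpref phi)) = True \<and> nblocks (kpref phi) = k}"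

definition Pi_krom :: "'p set \<Rightarrow> ('p \<Rightarrow> nat) \<Rightarrow> nat \<Rightarrow> nat \<Rightarrow> 'p krom set" where
  "Pi_krom tau ar r k = {phi. krom_wf tau ar r phi \<and> kpref phi \<noteq> [] \<and>
      fst (hd (kpref phi)) = False \<and> nblocks (kpref phi) = k}"

text \<open>Finite tau-structures with universe a finite nonempty set of naturals (every finite
structure is isomorphic to one of these).\<close>
definition tuples :: "nat set \<Rightarrow> nat \<Rightarrow> nat list set" where
  "tuples A n = {xs. length xs = n \<and> set xs \<subseteq> A}"

definition is_structure :: "'p set \<Rightarrow> ('p \<Rightarrow> nat) \<Rightarrow> nat set \<Rightarrow> ('p \<Rightarrow> nat list set) \<Rightarrow> bool" where
  "is_structure tau ar A I \<longleftrightarrow> finite A \<and> A \<noteq> {} \<and> (\<forall>p \<in> tau. I p \<subseteq> tuples A (ar p))"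

fun folit_sem :: "('p \<Rightarrow> nat list set) \<Rightarrow> (nat \<Rightarrow> nat) \<Rightarrow> 'p folit \<Rightarrow> bool" where
  "folit_sem I s (FPos p ys) = (map s ys \<in> I p)"
| "folit_sem I s (FNeg p ys) = (map s ys \<notin> I p)"
| "folit_sem I s (FEq x y) = (s x = s y)"
| "folit_sem I s (FNeq x y) = (s x \<noteq> s y)"

fun solit_sem :: "(nat \<Rightarrow> nat list set) \<Rightarrow> (nat \<Rightarrow> nat) \<Rightarrow> solit \<Rightarrow> bool" where
  "solit_sem V s (SPos i zs) = (map s zs \<in> V i)"
| "solit_sem V s (SNeg i zs) = (map s zs \<notin> V i)"
| "solit_sem V s (SNonempty i) = (V i \<noteq> {})"
| "solit_sem V s SBot = False"

fun clause_sem :: "('p \<Rightarrow> nat list set) \<Rightarrow> (nat \<Rightarrow> nat list set) \<Rightarrow> (nat \<Rightarrow> nat) \<Rightarrow> 'p clause \<Rightarrow> bool" where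
  "clause_sem I V s (bs, h1, h2) =
     ((\<exists>b \<in> set bs. folit_sem I s b) \<or> solit_sem V s h1 \<or> solit_sem V s h2)"

text \<open>Evaluation of the prefix from position n on; V interprets R_0..R_(n-1).\<close>
fun pref_sem :: "nat set \<Rightarrow> ('p \<Rightarrow> nat list set) \<Rightarrow> (bool \<times> nat) list \<Rightarrow> nat
                 \<Rightarrow> (nat \<Rightarrow> nat list set) \<Rightarrow> 'p clause list \<Rightarrow> bool" where
  "pref_sem A I [] n V M =
     (\<forall>s. (\<forall>x. s x \<in> A) \<longrightarrow> (\<forall>C \<in> set M. clause_sem I V s C))"
| "pref_sem A I ((e, a) # qs) n V M =
     (if e then (\<exists>R. R \<subseteq> tuples A a \<and> pref_sem A I qs (Suc n) (V(n := R)) M)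
           else (\<forall>R. R \<subseteq> tuples A a \<longrightarrow> pref_sem A I qs (Suc n) (V(n := R)) M))"

definition krom_sat :: "nat set \<Rightarrow> ('p \<Rightarrow> nat list set) \<Rightarrow> 'p krom \<Rightarrow> bool" where
  "krom_sat A I phi = pref_sem A I (kpref phi) 0 (\<lambda>_. {}) (kmat phi)"

definition krom_equiv :: "'p set \<Rightarrow> ('p \<Rightarrow> nat) \<Rightarrow> 'p krom \<Rightarrow> 'p krom \<Rightarrow> bool" where
  "krom_equiv tau ar phi psi \<longleftrightarrow>
     (\<forall>A I. is_structure tau ar A I \<longrightarrow> (krom_sat A I phi \<longleftrightarrow> krom_sat A I psi))"

text \<open>L1 <= L2 over vocabulary tau, where L1 L2 are given by their tau-formulas.\<close>
definition logic_le :: "'p set \<Rightarrow> ('p \<Rightarrow> nat) \<Rightarrow> 'p krom set \<Rightarrow> 'p krom set \<Rightarrow> bool" where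
  "logic_le tau ar L1 L2 \<longleftrightarrow> (\<forall>phi \<in> L1. \<exists>psi \<in> L2. krom_equiv tau ar phi psi)"

end

theory Submission
  imports Defs
begin

text \<open>A trailing universal second-order quantifier can be eliminated from a Krom formula.
Since \<open>\<forall>R\<close> commutes with the first-order universal block and with conjunction, it suffices to
eliminate it from a single clause, which contains at most two literals about \<open>R\<close>. If these
literals can be falsified simultaneously (by \<open>R = {}\<close> or \<open>R = {z, z'}\<close>) they may be dropped;
\<open>\<forall>R (\<beta> \<or> R z \<or> \<not> R z')\<close> is equivalent to the conjunction of the first-order clauses
\<open>\<beta> \<or> z\<^sub>i = z'\<^sub>i\<close>; and \<open>\<forall>R (\<beta> \<or> \<exists>z. R z \<or> \<not> R z')\<close> is valid.
Repeating this removes the last block of a prefix ending universally, and appending a vacuous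
universal quantifier adds a block to a prefix ending existentially. A \<open>\<Sigma>\<^sub>k\<close> prefix with \<open>k\<close> odd
and a \<open>\<Pi>\<^sub>k\<close> prefix with \<open>k\<close> even end existentially, and their \<open>k + 1\<close> analogues universally.\<close>

fun mentions :: "nat \<Rightarrow> solit \<Rightarrow> bool" where
  "mentions m (SPos i _) = (i = m)"
| "mentions m (SNeg i _) = (i = m)"
| "mentions m (SNonempty i) = (i = m)"
| "mentions m SBot = False"

fun solit_arity :: "nat \<Rightarrow> nat \<Rightarrow> solit \<Rightarrow> bool" where
  "solit_arity m a (SPos i zs) = (i = m \<longrightarrow> length zs = a)"
| "solit_arity m a (SNeg i zs) = (i = m \<longrightarrow> length zs = a)"
| "solit_arity m a _ = True"

definition eq_clauses :: "nat list \<Rightarrow> nat list \<Rightarrow> 'p folit list list" where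
  "eq_clauses zs zs' = map (\<lambda>(x, y). [FEq x y]) (zip zs zs')"

lemma eq_clauses_sem:
  "length zs = length zs' \<Longrightarrow>
    (\<forall>es \<in> set (eq_clauses zs zs'). \<exists>e \<in> set es. folit_sem I s e) \<longleftrightarrow> map s zs = map s zs'"
  by (induction zs zs' rule: list_induct2) (auto simp: eq_clauses_def)

text \<open>A list of lists of first-order literals is read as a conjunction of disjunctions,
so \<open>[[]]\<close> is falsum and \<open>[]\<close> is truth.\<close>

fun elim_two_lits :: "solit \<Rightarrow> solit \<Rightarrow> 'p folit list list" where
  "elim_two_lits (SPos _ zs) (SNeg _ zs') = eq_clauses zs zs'"
| "elim_two_lits (SNeg _ zs) (SPos _ zs') = eq_clauses zs zs'"
| "elim_two_lits (SNonempty _) (SNeg _ _) = []"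
| "elim_two_lits (SNeg _ _) (SNonempty _) = []"
| "elim_two_lits _ _ = [[]]"

lemma all_subset_mem_imp_mem_iff:
  "x \<in> T \<Longrightarrow> (\<forall>R \<subseteq> T. x \<in> R \<longrightarrow> y \<in> R) \<longleftrightarrow> x = y"
  by (auto dest: spec[of _ "{x}"])

lemma map_in_tuples: "\<forall>x. s x \<in> A \<Longrightarrow> map s zs \<in> tuples A (length zs)"
  by (auto simp: tuples_def)

lemma all_two_lits_iff_elim_two_lits:
  assumes "mentions m h1" "mentions m h2" "solit_arity m a h1" "solit_arity m a h2" "\<forall>x. s x \<in> A"
  shows "(\<forall>R \<subseteq> tuples A a. solit_sem (V(m := R)) s h1 \<or> solit_sem (V(m := R)) s h2)
     \<longleftrightarrow> (\<forall>es \<in> set (elim_two_lits h1 h2). \<exists>e \<in> set es. folit_sem I s e)"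
proof -
  have T: "map s zs \<in> tuples A a" if "length zs = a" for zs
    using map_in_tuples[of s A zs] assms(5) that by simp
  show ?thesis
    using assms
    apply (cases h1; cases h2; simp add: eq_clauses_sem)
    subgoal by (intro exI[of _ "{}"]) simp
    subgoal for _ zs _ zs'
      using all_subset_mem_imp_mem_iff[OF T, of zs' "map s zs"] by (auto simp: disj_commute)
    subgoal for _ zs _ zs' using all_subset_mem_imp_mem_iff[OF T, of zs "map s zs'"] by simp
    subgoal for _ zs _ zs' using T by (intro exI[of _ "{map s zs, map s zs'}"]) simp
    by blast
qed

definition erase_lit :: "nat \<Rightarrow> solit \<Rightarrow> solit" where
  "erase_lit m h = (if mentions m h then SBot else h)"

lemma solit_sem_upd_unmentioned: "\<not> mentions m h \<Longrightarrow> solit_sem (V(m := R)) s h = solit_sem V s h"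
  by (cases h) auto

lemma ex_subset_falsifies_solit:
  assumes "mentions m h" "solit_arity m a h" "\<forall>x. s x \<in> A"
  shows "\<exists>R \<subseteq> tuples A a. \<not> solit_sem (V(m := R)) s h"
proof (cases h)
  case (SNeg i zs)
  then show ?thesis
    using assms map_in_tuples[of s A zs] by (intro exI[of _ "{map s zs}"]) auto
qed (use assms in auto)

lemma all_two_lits_iff_erase_lit:
  assumes "\<not> (mentions m h1 \<and> mentions m h2)" "solit_arity m a h1" "solit_arity m a h2" "\<forall>x. s x \<in> A"
  shows "(\<forall>R \<subseteq> tuples A a. solit_sem (V(m := R)) s h1 \<or> solit_sem (V(m := R)) s h2)
     \<longleftrightarrow> solit_sem V s (erase_lit m h1) \<or> solit_sem V s (erase_lit m h2)"
proof (cases "mentions m h1")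
  case True
  then show ?thesis
    using assms ex_subset_falsifies_solit[of m h1 a s A V] solit_sem_upd_unmentioned[of m h2]
    by (auto simp: erase_lit_def)
next
  case False
  show ?thesis
  proof (cases "mentions m h2")
    case True
    then show ?thesis
      using False assms ex_subset_falsifies_solit[of m h2 a s A V] solit_sem_upd_unmentioned[of m h1]
      by (auto simp: erase_lit_def)
  qed (use False solit_sem_upd_unmentioned in \<open>auto simp: erase_lit_def\<close>)
qed

fun elim_clause :: "nat \<Rightarrow> 'p clause \<Rightarrow> 'p clause list" where
  "elim_clause m (bs, h1, h2) =
     (if mentions m h1 \<and> mentions m h2 then map (\<lambda>es. (bs @ es, SBot, SBot)) (elim_two_lits h1 h2)
      else [(bs, erase_lit m h1, erase_lit m h2)])"

lemma all_clause_sem_iff_elim_clause: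
  assumes "solit_arity m a h1" "solit_arity m a h2" "\<forall>x. s x \<in> A"
  shows "(\<forall>R \<subseteq> tuples A a. clause_sem I (V(m := R)) s (bs, h1, h2))
     \<longleftrightarrow> (\<forall>C \<in> set (elim_clause m (bs, h1, h2)). clause_sem I V s C)"
proof -
  have "(\<forall>R \<subseteq> tuples A a. clause_sem I (V(m := R)) s (bs, h1, h2))
     \<longleftrightarrow> (\<exists>b \<in> set bs. folit_sem I s b) \<or>
       (\<forall>R \<subseteq> tuples A a. solit_sem (V(m := R)) s h1 \<or> solit_sem (V(m := R)) s h2)"
    by auto
  then show ?thesis
    using assms all_two_lits_iff_elim_two_lits[of m h1 h2 a s A V I] all_two_lits_iff_erase_lit[of m h1 h2 a s A V]
    by auto
qed

definition elim_matrix :: "nat \<Rightarrow> 'p clause list \<Rightarrow> 'p clause list" where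
  "elim_matrix m M = concat (map (elim_clause m) M)"

lemma pref_sem_forall_eq_elim_matrix:
  assumes "\<forall>(bs, h1, h2) \<in> set M. solit_arity m a h1 \<and> solit_arity m a h2"
  shows "pref_sem A I [(False, a)] m V M = pref_sem A I [] m V (elim_matrix m M)"
proof -
  have clause: "(\<forall>R \<subseteq> tuples A a. clause_sem I (V(m := R)) s C)
      \<longleftrightarrow> (\<forall>C' \<in> set (elim_clause m C). clause_sem I V s C')"
    if "C \<in> set M" "\<forall>x. s x \<in> A" for C s
  proof -
    obtain bs h1 h2 where C: "C = (bs, h1, h2)"
      by (cases C)
    then have "solit_arity m a h1" "solit_arity m a h2"
      using that(1) assms by auto
    then show ?thesis
      unfolding C by (rule all_clause_sem_iff_elim_clause[OF _ _ that(2)])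
  qed
  have "pref_sem A I [(False, a)] m V M \<longleftrightarrow>
      (\<forall>s. (\<forall>x. s x \<in> A) \<longrightarrow> (\<forall>C \<in> set M. \<forall>R \<subseteq> tuples A a. clause_sem I (V(m := R)) s C))"
    by (simp del: clause_sem.simps) blast
  also have "\<dots> \<longleftrightarrow> pref_sem A I [] m V (elim_matrix m M)"
    using clause by (auto simp del: clause_sem.simps simp: elim_matrix_def)
  finally show ?thesis .
qed

lemma pref_sem_append_cong:
  assumes "\<And>W. pref_sem A I Q (n + length P) W M = pref_sem A I Q' (n + length P) W M'"
  shows "pref_sem A I (P @ Q) n V M = pref_sem A I (P @ Q') n V M'"
  using assms
proof (induction P arbitrary: n V)
  case (Cons q P)
  have "pref_sem A I (P @ Q) (Suc n) W M = pref_sem A I (P @ Q') (Suc n) W M'" for W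
    using Cons.IH Cons.prems by simp
  then show ?case
    by (cases q) simp
qed simp

lemma solit_arity_if_wf_snoc: "solit_wf (pre @ [(e, a)]) h \<Longrightarrow> solit_arity (length pre) a h"
  by (cases h) auto

lemma solit_wf_erase_lit: "solit_wf (pre @ [q]) h \<Longrightarrow> solit_wf pre (erase_lit (length pre) h)"
  by (cases h) (auto simp: erase_lit_def nth_append)

lemma folit_wf_elim_two_lits: "es \<in> set (elim_two_lits h1 h2) \<Longrightarrow> e \<in> set es \<Longrightarrow> folit_wf tau ar e"
  by (induction h1 h2 rule: elim_two_lits.induct) (auto simp: eq_clauses_def)

lemma krom_wf_elim_matrix:
  assumes "krom_wf tau ar r (Krom (pre @ [q]) M)"
  shows "krom_wf tau ar r (Krom pre (elim_matrix (length pre) M))"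
  using assms
  by (fastforce simp: krom_wf_def elim_matrix_def solit_wf_erase_lit dest: folit_wf_elim_two_lits split: if_splits)

lemma krom_sat_elim_matrix:
  assumes "krom_wf tau ar r (Krom (pre @ [(False, a)]) M)"
  shows "krom_sat A I (Krom (pre @ [(False, a)]) M) = krom_sat A I (Krom pre (elim_matrix (length pre) M))"
proof -
  have "\<forall>(bs, h1, h2) \<in> set M. solit_arity (length pre) a h1 \<and> solit_arity (length pre) a h2"
    using assms solit_arity_if_wf_snoc by (fastforce simp: krom_wf_def)
  then have "pref_sem A I [(False, a)] (0 + length pre) W M
      = pref_sem A I [] (0 + length pre) W (elim_matrix (length pre) M)" for W
    unfolding add_0 by (rule pref_sem_forall_eq_elim_matrix)
  then have "pref_sem A I (pre @ [(False, a)]) 0 V M = pref_sem A I (pre @ []) 0 V (elim_matrix (length pre) M)"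
    for V by (rule pref_sem_append_cong)
  then show ?thesis
    by (simp add: krom_sat_def)
qed

lemma elim_matrix_unmentioned:
  assumes "krom_wf tau ar r (Krom pre M)"
  shows "elim_matrix (length pre) M = M"
proof -
  have unmentioned: "\<not> mentions (length pre) h" if "solit_wf pre h" for h
    using that by (cases h) auto
  have "\<forall>C \<in> set M. elim_clause (length pre) C = [C]"
    using assms unmentioned by (fastforce simp: krom_wf_def erase_lit_def)
  then show ?thesis
    unfolding elim_matrix_def by (induction M) auto
qed

lemma krom_wf_snoc_forall:
  assumes "krom_wf tau ar r (Krom pre M)" "1 \<le> a" "a \<le> r"
  shows "krom_wf tau ar r (Krom (pre @ [(False, a)]) M)"
proof -
  have "solit_wf (pre @ [q]) h" if "solit_wf pre h" for q h
    using that by (cases h) (auto simp: nth_append)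
  then show ?thesis
    using assms by (fastforce simp: krom_wf_def)
qed

lemma krom_equiv_snoc_forall:
  assumes "krom_wf tau ar r (Krom pre M)" "1 \<le> a" "a \<le> r"
  shows "krom_equiv tau ar (Krom pre M) (Krom (pre @ [(False, a)]) M)"
  using krom_sat_elim_matrix[OF krom_wf_snoc_forall[OF assms]] elim_matrix_unmentioned[OF assms(1)]
  by (simp add: krom_equiv_def)

lemma nblocks_single: "nblocks [q] = 1"
  by (simp add: nblocks_def)

lemma nblocks_snoc:
  "pre \<noteq> [] \<Longrightarrow> nblocks (pre @ [q]) = (if fst q = fst (last pre) then nblocks pre else Suc (nblocks pre))"
  by (simp add: nblocks_def remdups_adj_append'' last_map)

lemma fst_last_iff_odd_nblocks:
  "pre \<noteq> [] \<Longrightarrow> fst (last pre) \<longleftrightarrow> (fst (hd pre) \<longleftrightarrow> odd (nblocks pre))"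
proof (induction pre rule: rev_induct)
  case (snoc q pre)
  show ?case
  proof (cases "pre = []")
    case False
    then show ?thesis
      using snoc.IH by (auto simp: nblocks_snoc)
  qed (simp add: nblocks_single)
qed simp

lemma ex_krom_equiv_drop_forall_block:
  assumes "krom_wf tau ar r (Krom pre M)" "\<not> fst (last pre)" "2 \<le> nblocks pre"
  shows "\<exists>psi. krom_wf tau ar r psi \<and> kpref psi \<noteq> [] \<and> fst (hd (kpref psi)) = fst (hd pre) \<and>
    Suc (nblocks (kpref psi)) = nblocks pre \<and> krom_equiv tau ar (Krom pre M) psi"
  using assms
proof (induction pre arbitrary: M rule: rev_induct)
  case Nil
  then show ?case by (simp add: nblocks_def)
next
  case (snoc q pre)
  obtain a where q: "q = (False, a)"
    using snoc.prems(2) by (cases q) auto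
  have "pre \<noteq> []"
    using snoc.prems(3) by (auto simp: nblocks_single)
  define M' where "M' = elim_matrix (length pre) M"
  have wf: "krom_wf tau ar r (Krom pre M')"
    using krom_wf_elim_matrix snoc.prems(1) by (simp add: M'_def)
  have equiv: "krom_equiv tau ar (Krom (pre @ [q]) M) (Krom pre M')"
    using krom_sat_elim_matrix[of tau ar r pre a M] snoc.prems(1) q by (simp add: krom_equiv_def M'_def)
  show ?case
  proof (cases "fst (last pre)")
    case True
    then have "Suc (nblocks pre) = nblocks (pre @ [q])"
      using nblocks_snoc[OF \<open>pre \<noteq> []\<close>] q by simp
    then show ?thesis
      using wf equiv \<open>pre \<noteq> []\<close> by (intro exI[of _ "Krom pre M'"]) auto
  next
    case False
    then have "nblocks (pre @ [q]) = nblocks pre"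
      using nblocks_snoc[OF \<open>pre \<noteq> []\<close>] q by simp
    then obtain psi where "krom_wf tau ar r psi" "kpref psi \<noteq> []" "fst (hd (kpref psi)) = fst (hd pre)"
        "Suc (nblocks (kpref psi)) = nblocks (pre @ [q])" "krom_equiv tau ar (Krom pre M') psi"
      using snoc.IH[OF wf False] snoc.prems(3) by auto
    then show ?thesis
      using equiv \<open>pre \<noteq> []\<close> by (intro exI[of _ psi]) (auto simp: krom_equiv_def)
  qed
qed

definition krom_blocks :: "'p set \<Rightarrow> ('p \<Rightarrow> nat) \<Rightarrow> nat \<Rightarrow> bool \<Rightarrow> nat \<Rightarrow> 'p krom set" where
  "krom_blocks tau ar r e k = {phi. krom_wf tau ar r phi \<and> kpref phi \<noteq> [] \<and>
      fst (hd (kpref phi)) = e \<and> nblocks (kpref phi) = k}"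

lemma Sigma_krom_eq_krom_blocks: "Sigma_krom tau ar r k = krom_blocks tau ar r True k"
  by (simp add: Sigma_krom_def krom_blocks_def)

lemma Pi_krom_eq_krom_blocks: "Pi_krom tau ar r k = krom_blocks tau ar r False k"
  by (simp add: Pi_krom_def krom_blocks_def)

lemma logic_le_krom_blocks_Suc:
  assumes "e \<longleftrightarrow> odd k"
  shows "logic_le tau ar (krom_blocks tau ar r e k) (krom_blocks tau ar r e (Suc k))"
  unfolding logic_le_def
proof
  fix phi assume phi: "phi \<in> krom_blocks tau ar r e k"
  obtain pre M where phi_eq: "phi = Krom pre M"
    by (cases phi)
  have wf: "krom_wf tau ar r (Krom pre M)" and pre: "pre \<noteq> []" "fst (hd pre) = e" "nblocks pre = k"
    using phi by (auto simp: krom_blocks_def phi_eq)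
  have "1 \<le> r"
    using wf pre(1) by (cases pre) (auto simp: krom_wf_def)
  moreover have "fst (last pre)"
    using fst_last_iff_odd_nblocks[OF pre(1)] pre(2,3) assms by simp
  ultimately have "Krom (pre @ [(False, 1)]) M \<in> krom_blocks tau ar r e (Suc k)"
    using krom_wf_snoc_forall[OF wf] pre by (simp add: krom_blocks_def nblocks_snoc)
  then show "\<exists>psi \<in> krom_blocks tau ar r e (Suc k). krom_equiv tau ar phi psi"
    using krom_equiv_snoc_forall[OF wf order.refl \<open>1 \<le> r\<close>] phi_eq by blast
qed

lemma logic_le_krom_blocks_pred:
  assumes "1 \<le> k" "e \<longleftrightarrow> odd k"
  shows "logic_le tau ar (krom_blocks tau ar r e (Suc k)) (krom_blocks tau ar r e k)"
  unfolding logic_le_def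
proof
  fix phi assume phi: "phi \<in> krom_blocks tau ar r e (Suc k)"
  obtain pre M where phi_eq: "phi = Krom pre M"
    by (cases phi)
  have wf: "krom_wf tau ar r (Krom pre M)" and pre: "pre \<noteq> []" "fst (hd pre) = e" "nblocks pre = Suc k"
    using phi by (auto simp: krom_blocks_def phi_eq)
  have "\<not> fst (last pre)"
    using fst_last_iff_odd_nblocks[OF pre(1)] pre(2,3) assms(2) by simp
  then show "\<exists>psi \<in> krom_blocks tau ar r e k. krom_equiv tau ar phi psi"
    using ex_krom_equiv_drop_forall_block[OF wf] pre assms(1) phi_eq by (fastforce simp: krom_blocks_def)
qed

theorem corollary2p2:
  fixes tau :: "'p set" and ar :: "'p \<Rightarrow> nat" and r k :: nat
  assumes "finite tau" and "1 \<le> k"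
  shows "(odd k \<longrightarrow>
            logic_le tau ar (Sigma_krom tau ar r k) (Sigma_krom tau ar r (k + 1)) \<and>
            logic_le tau ar (Sigma_krom tau ar r (k + 1)) (Sigma_krom tau ar r k))
       \<and> (even k \<longrightarrow>
            logic_le tau ar (Pi_krom tau ar r k) (Pi_krom tau ar r (k + 1)) \<and>
            logic_le tau ar (Pi_krom tau ar r (k + 1)) (Pi_krom tau ar r k))"
  using logic_le_krom_blocks_Suc[of True k tau ar r] logic_le_krom_blocks_pred[OF assms(2), of True tau ar r]
    logic_le_krom_blocks_Suc[of False k tau ar r] logic_le_krom_blocks_pred[OF assms(2), of False tau ar r]
  by (simp add: Sigma_krom_eq_krom_blocks Pi_krom_eq_krom_blocks)

end
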